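(* Let $K\ge2$, let $a\in\Delta^{K-1}$ with $a(i)>0$ for all $i\in[K]$, let $T_0\in\mathbb N$, and let $\tau_{T_0}\in\mathbb Z_{\ge0}^K$ with $\sum_i\tau_{T_0}(i)=T_0$. For $t\ge T_0$ define recursively $\tau_{t+1}=\tau_t+e_{A_{t+1}}$, where $A_{t+1}\in\arg\max_{i\in[K]}\{t\,a(i)-\tau_t(i)\}$ (ties broken arbitrarily) and $e_j$ is the $j$-th standard basis vector. Then there exists a finite $T'\ge T_0$ such that for all $t\ge T'$ and all $i\in[K]$: $\tau_t(i)/t\le a(i)+1/t$ (the set of over-sampled arms $\{i:\tau_t(i)/t>a(i)+1/t\}$ is empty), and $$\Big|\frac{\tau_t(i)}{t}-a(i)\Big|<\frac{K}{t}.$$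
   Context: $\Delta^{K-1}=\{a\in[0,1]^K:\sum_i a(i)=1\}$. $\tau_t(i)$ counts how many of the first $t$ selections were arm $i$, so $\sum_i\tau_t(i)=t$. *)

theory Defs
  imports Complex_Main
begin

end

theory Submission
  imports Defs
begin

text \<open>Track the deficit \<open>d\<^sub>t(i) = t a(i) - \<tau>\<^sub>t(i)\<close>. The deficits sum to zero, so the arm of maximal
  deficit, which is the one sampled, has nonnegative deficit; sampling lowers it by \<open>1 - a(i)\<close>,
  hence a deficit above \<open>-1\<close> stays above \<open>-1\<close>. An arm that is never sampled has its deficit
  grow by \<open>a(i) > 0\<close> per round, so every deficit eventually exceeds \<open>-1\<close> for good. Then
  \<open>\<tau>\<^sub>t(i)/t \<le> a(i) + 1/t\<close>, and since the other \<open>K - 1\<close> deficits exceed \<open>-1\<close> and all sum to zero,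
  \<open>d\<^sub>t(i) \<le> K - 1\<close>, so \<open>|\<tau>\<^sub>t(i)/t - a(i)| = |d\<^sub>t(i)|/t < K/t\<close>.\<close>

lemma sum_eq_zero_imp_max_nonneg:
  fixes f :: "'a \<Rightarrow> real"
  assumes "finite I" "I \<noteq> {}" "sum f I = 0" "\<And>i. i \<in> I \<Longrightarrow> f i \<le> f j"
  shows "0 \<le> f j"
proof -
  have "0 \<le> (\<Sum>i\<in>I. f j)"
    using assms(3,4) sum_mono[of I f "\<lambda>_. f j"] by simp
  then have "0 \<le> real (card I) * f j" by simp
  moreover have "card I > 0" using assms(1,2) by (simp add: card_gt_0_iff)
  ultimately show ?thesis by (simp add: zero_le_mult_iff)
qed

lemma sum_eq_zero_imp_le_card_minus_one:
  fixes f :: "'a \<Rightarrow> real"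
  assumes "finite I" "i \<in> I" "sum f I = 0" "\<And>j. j \<in> I \<Longrightarrow> -1 < f j"
  shows "f i \<le> real (card I) - 1"
proof -
  have "(\<Sum>j\<in>I - {i}. -1) \<le> (\<Sum>j\<in>I - {i}. f j)"
    using assms(4) by (intro sum_mono) (auto intro: less_imp_le)
  moreover have "sum f I = f i + (\<Sum>j\<in>I - {i}. f j)"
    using assms(1,2) by (simp add: sum.remove)
  moreover have "card I \<ge> 1"
    using assms(1,2) by (auto simp: Suc_le_eq card_gt_0_iff)
  ultimately show ?thesis
    using assms(1-3) by (simp add: card_Diff_singleton of_nat_diff)
qed

locale arm_tracking =
  fixes K :: nat and a :: "nat \<Rightarrow> real" and T0 :: nat
    and tau :: "nat \<Rightarrow> nat \<Rightarrow> nat" and A :: "nat \<Rightarrow> nat"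
  assumes a_pos: "\<And>i. i < K \<Longrightarrow> a i > 0"
    and a_sum: "(\<Sum>i<K. a i) = 1"
    and tau_init: "(\<Sum>i<K. tau T0 i) = T0"
    and A_arm: "\<And>t. t \<ge> T0 \<Longrightarrow> A (Suc t) < K"
    and A_argmax: "\<And>t i. t \<ge> T0 \<Longrightarrow> i < K \<Longrightarrow>
        real t * a i - real (tau t i) \<le> real t * a (A (Suc t)) - real (tau t (A (Suc t)))"
    and tau_step: "\<And>t i. t \<ge> T0 \<Longrightarrow> i < K \<Longrightarrow>
        tau (Suc t) i = tau t i + (if i = A (Suc t) then 1 else 0)"
begin

definition deficit :: "nat \<Rightarrow> nat \<Rightarrow> real" where
  "deficit t i = real t * a i - real (tau t i)"

lemma K_pos: "K > 0"
  using a_sum by (cases K) auto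

lemma sum_tau: "t \<ge> T0 \<Longrightarrow> (\<Sum>i<K. tau t i) = t"
proof (induction t rule: dec_induct)
  case base
  show ?case by (rule tau_init)
next
  case (step t)
  have "(\<Sum>i<K. tau (Suc t) i) = (\<Sum>i<K. tau t i + (if i = A (Suc t) then 1 else 0))"
    using tau_step step.hyps(1) by (intro sum.cong) auto
  also have "\<dots> = Suc t"
    using A_arm[OF step.hyps(1)] by (simp add: sum.distrib step.IH)
  finally show ?case .
qed

lemma sum_deficit: "t \<ge> T0 \<Longrightarrow> (\<Sum>i<K. deficit t i) = 0"
  by (simp add: deficit_def sum_subtractf flip: sum_distrib_left of_nat_sum)
     (simp add: a_sum sum_tau)

lemma deficit_sampled_nonneg: "t \<ge> T0 \<Longrightarrow> 0 \<le> deficit t (A (Suc t))"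
  using K_pos sum_deficit A_argmax
  by (intro sum_eq_zero_imp_max_nonneg[of "{..<K}"]) (auto simp: deficit_def)

lemma deficit_Suc:
  "t \<ge> T0 \<Longrightarrow> i < K \<Longrightarrow>
     deficit (Suc t) i = deficit t i + a i - (if i = A (Suc t) then 1 else 0)"
  using tau_step by (simp add: deficit_def algebra_simps)

lemma deficit_gt_minus_one_Suc:
  assumes "t \<ge> T0" "i < K" "-1 < deficit t i"
  shows "-1 < deficit (Suc t) i"
  using deficit_Suc[OF assms(1,2)] deficit_sampled_nonneg[OF assms(1)] a_pos[OF assms(2)] assms(3)
  by (cases "i = A (Suc t)") auto

lemma deficit_gt_minus_one_mono:
  assumes "t \<ge> T0" "i < K" "-1 < deficit t i" "s \<ge> t"
  shows "-1 < deficit s i"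
  using assms(4)
proof (induction s rule: dec_induct)
  case base
  show ?case by (rule assms(3))
next
  case (step s)
  then show ?case using deficit_gt_minus_one_Suc[of s i] assms(1,2) by simp
qed

text \<open>An arm with deficit \<open>\<le> -1\<close> is never the sampled one, so its deficit grows linearly.\<close>

lemma ex_deficit_gt_minus_one:
  assumes i: "i < K"
  shows "\<exists>t\<ge>T0. -1 < deficit t i"
proof (rule ccontr)
  assume "\<not> ?thesis"
  then have low: "deficit t i \<le> -1" if "t \<ge> T0" for t
    using that by force
  have linear: "deficit (T0 + n) i = deficit T0 i + real n * a i" for n
  proof (induction n)
    case 0
    show ?case by simp
  next
    case (Suc n)
    have "i \<noteq> A (Suc (T0 + n))"
      using deficit_sampled_nonneg[of "T0 + n"] low[of "T0 + n"] by auto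
    then show ?case
      using deficit_Suc[of "T0 + n" i] i Suc.IH by (simp add: algebra_simps)
  qed
  obtain n where "-1 - deficit T0 i < real n * a i"
    using ex_less_of_nat_mult[OF a_pos[OF i]] by blast
  then show False
    using linear[of n] low[of "T0 + n"] by simp
qed

lemma eventually_deficits_gt_minus_one:
  "eventually (\<lambda>t. \<forall>i\<in>{..<K}. -1 < deficit t i) sequentially"
proof (rule eventually_ball_finite[OF finite_lessThan], rule ballI)
  fix i assume "i \<in> {..<K}"
  then obtain t where "t \<ge> T0" "-1 < deficit t i"
    using ex_deficit_gt_minus_one by auto
  with \<open>i \<in> {..<K}\<close> show "eventually (\<lambda>t. -1 < deficit t i) sequentially"
    unfolding eventually_sequentially using deficit_gt_minus_one_mono by blast
qed

lemma frequency_bounds: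
  assumes t: "t \<ge> T0" "t > 0" and i: "i < K"
    and low: "\<And>j. j < K \<Longrightarrow> -1 < deficit t j"
  shows "real (tau t i) / real t \<le> a i + 1 / real t"
    and "\<bar>real (tau t i) / real t - a i\<bar> < real K / real t"
proof -
  have high: "deficit t i \<le> real K - 1"
    using sum_eq_zero_imp_le_card_minus_one[of "{..<K}" i "deficit t"] sum_deficit[OF t(1)] low i
    by simp
  have "1 \<le> real K"
    using K_pos by simp
  have freq: "real (tau t i) / real t - a i = - deficit t i / real t"
    using t(2) by (simp add: deficit_def field_simps)
  show "real (tau t i) / real t \<le> a i + 1 / real t"
    using low[OF i] t(2) by (simp add: deficit_def field_simps)
  show "\<bar>real (tau t i) / real t - a i\<bar> < real K / real t"
  proof -
    have "\<bar>deficit t i\<bar> < real K"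
      using low[OF i] high \<open>1 \<le> real K\<close> by linarith
    then show ?thesis
      unfolding freq using t(2) by (simp add: divide_strict_right_mono)
  qed
qed

end

theorem mainTheorem12:
  fixes K :: nat and a :: "nat \<Rightarrow> real" and T0 :: nat
    and tau :: "nat \<Rightarrow> nat \<Rightarrow> nat" and A :: "nat \<Rightarrow> nat"
  assumes K_ge: "K \<ge> 2"
    and a_pos: "\<And>i. i < K \<Longrightarrow> a i > 0"
    and a_sum: "(\<Sum>i<K. a i) = 1"
    and tau_init: "(\<Sum>i<K. tau T0 i) = T0"
    and A_arm: "\<And>t. t \<ge> T0 \<Longrightarrow> A (Suc t) < K"
    and A_argmax: "\<And>t i. t \<ge> T0 \<Longrightarrow> i < K \<Longrightarrow>
        real t * a i - real (tau t i) \<le> real t * a (A (Suc t)) - real (tau t (A (Suc t)))"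
    and tau_step: "\<And>t i. t \<ge> T0 \<Longrightarrow> i < K \<Longrightarrow>
        tau (Suc t) i = tau t i + (if i = A (Suc t) then 1 else 0)"
  shows "\<exists>T'\<ge>T0. \<forall>t\<ge>T'. \<forall>i<K.
           real (tau t i) / real t \<le> a i + 1 / real t \<and>
           \<bar>real (tau t i) / real t - a i\<bar> < real K / real t"
proof -
  interpret arm_tracking K a T0 tau A
    using a_pos a_sum tau_init A_arm A_argmax tau_step by unfold_locales
  obtain N where N: "\<And>t i. t \<ge> N \<Longrightarrow> i < K \<Longrightarrow> -1 < deficit t i"
    using eventually_deficits_gt_minus_one unfolding eventually_sequentially by auto
  show ?thesis
    using frequency_bounds N by (intro exI[of _ "max (max N T0) 1"]) auto
qed

end
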